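(* Let $S=s_1,\ldots,s_n$ be a sequence of positive real numbers, let $\alpha>1$, $\gamma>0$, let $k$ be a positive integer and $\epsilon>0$. Let $(L^*,\beta^* )$ be an optimal solution of $\textsc{Exp}(\alpha)$ for $S,\alpha,\gamma,k$, and let $g=(\prod_{i=1}^n s_i)^{1/n}$. Let $(L,\beta)$ be the output of $\textit{ExpAlpha}(S,\alpha,\gamma,k,\epsilon)$. Then \[ \mathrm{score}_{\exp}(L,S;\alpha,\beta,\gamma)-n\log g\le(1+\epsilon)\big(\mathrm{score}_{\exp}(L^*,S;\alpha,\beta^*,\gamma)-n\log g\big). \] Moreover, if $g\ge1$, then $\mathrm{score}_{\exp}(L,S;\alpha,\beta,\gamma)\le(1+\epsilon)\,\mathrm{score}_{\exp}(L^*,S;\alpha,\beta^*,\gamma)$.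
   Context: A level sequence is $L=\ell_1,\ldots,\ell_n$ of integers with $0\le\ell_i\le k$; set $\ell_0=0$. The penalty is $\mathrm{pen}(x,y)=\max(y-x,0)\,\gamma\log n$. The exponential density is $p_{\exp}(s;\lambda)=\lambda e^{-\lambda s}$. For $\alpha\ge1$, $\beta>0$: $\mathrm{score}_{\exp}(L,S;\alpha,\beta,\gamma)=\sum_{i=1}^n\big[-\log p_{\exp}(s_i;\beta\alpha^{\ell_i})+\mathrm{pen}(\ell_{i-1},\ell_i)\big]$. Problem $\textsc{Exp}(\alpha)$: given $S,\alpha,\gamma,k$, find $L$ and $\beta>0$ minimizing this score. $\textit{Viterbi}(S,\alpha,\beta,\gamma,k,p_{\exp})$ returns a level sequence minimizing the score for fixed $\alpha,\beta$. Algorithm $\textit{ExpAlpha}(S,\alpha,\gamma,k,\epsilon)$: let $\mu=\frac1n\sum_i s_i$ and $\beta=1/\mu$; while $\beta\ge1/(\alpha^k\mu)$: run $L=\textit{Viterbi}(S,\alpha,\beta,\gamma,k,p_{\exp})$ and set $\beta\leftarrow\beta/(1+\epsilon)$. Return the tested pair $(L,\beta)$ with the smallest score. *)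

theory Defs
  imports Complex_Main
begin

(* Sequences S = s_1..s_n and level sequences L = l_1..l_n are functions on nat,
   only indices 1..n matter.  The convention l_0 = 0 is built into prev_level. *)

definition pen :: "nat \<Rightarrow> real \<Rightarrow> nat \<Rightarrow> nat \<Rightarrow> real" where
  "pen n \<gamma> x y = max (real y - real x) 0 * \<gamma> * ln (real n)"

definition p_exp :: "real \<Rightarrow> real \<Rightarrow> real" where
  "p_exp s lam = lam * exp (- lam * s)"

definition prev_level :: "(nat \<Rightarrow> nat) \<Rightarrow> nat \<Rightarrow> nat" where
  "prev_level L i = (if i = 1 then 0 else L (i - 1))"

definition score_exp ::
  "nat \<Rightarrow> (nat \<Rightarrow> nat) \<Rightarrow> (nat \<Rightarrow> real) \<Rightarrow> real \<Rightarrow> real \<Rightarrow> real \<Rightarrow> real" where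
  "score_exp n L s \<alpha> \<beta> \<gamma> =
     (\<Sum>i = 1..n. - ln (p_exp (s i) (\<beta> * \<alpha> ^ L i)) + pen n \<gamma> (prev_level L i) (L i))"

definition is_level_seq :: "nat \<Rightarrow> nat \<Rightarrow> (nat \<Rightarrow> nat) \<Rightarrow> bool" where
  "is_level_seq n k L \<longleftrightarrow> (\<forall>i\<in>{1..n}. L i \<le> k)"

definition exp_opt ::
  "nat \<Rightarrow> (nat \<Rightarrow> real) \<Rightarrow> real \<Rightarrow> real \<Rightarrow> nat \<Rightarrow> (nat \<Rightarrow> nat) \<Rightarrow> real \<Rightarrow> bool" where
  "exp_opt n s \<alpha> \<gamma> k L \<beta> \<longleftrightarrow>
     is_level_seq n k L \<and> \<beta> > 0 \<and>
     (\<forall>L' \<beta>'. is_level_seq n k L' \<longrightarrow> \<beta>' > 0 \<longrightarrow>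
        score_exp n L s \<alpha> \<beta> \<gamma> \<le> score_exp n L' s \<alpha> \<beta>' \<gamma>)"

definition viterbi_out ::
  "nat \<Rightarrow> (nat \<Rightarrow> real) \<Rightarrow> real \<Rightarrow> real \<Rightarrow> real \<Rightarrow> nat \<Rightarrow> (nat \<Rightarrow> nat) \<Rightarrow> bool" where
  "viterbi_out n s \<alpha> \<beta> \<gamma> k L \<longleftrightarrow>
     is_level_seq n k L \<and>
     (\<forall>L'. is_level_seq n k L' \<longrightarrow> score_exp n L s \<alpha> \<beta> \<gamma> \<le> score_exp n L' s \<alpha> \<beta> \<gamma>)"

definition mean_seq :: "nat \<Rightarrow> (nat \<Rightarrow> real) \<Rightarrow> real" where
  "mean_seq n s = (\<Sum>i = 1..n. s i) / real n"

definition beta_iter :: "nat \<Rightarrow> (nat \<Rightarrow> real) \<Rightarrow> real \<Rightarrow> nat \<Rightarrow> real" where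
  "beta_iter n s \<epsilon> j = (1 / mean_seq n s) / (1 + \<epsilon>) ^ j"

(* j-th iteration is executed (loop condition beta >= 1/(alpha^k mu)); the set of
   such j is downward closed, so these are exactly the iterations performed *)
definition tested :: "nat \<Rightarrow> (nat \<Rightarrow> real) \<Rightarrow> real \<Rightarrow> nat \<Rightarrow> real \<Rightarrow> nat set" where
  "tested n s \<alpha> k \<epsilon> = {j. beta_iter n s \<epsilon> j \<ge> 1 / (\<alpha> ^ k * mean_seq n s)}"

(* (L, beta) is a possible output of ExpAlpha(S, alpha, gamma, k, eps): for each
   tested beta_j, Viterbi returns some optimal level sequence V j, and the returned
   pair is a tested pair of smallest score (any choice among ties). *)
definition exp_alpha_out ::
  "nat \<Rightarrow> (nat \<Rightarrow> real) \<Rightarrow> real \<Rightarrow> real \<Rightarrow> nat \<Rightarrow> real \<Rightarrow> (nat \<Rightarrow> nat) \<Rightarrow> real \<Rightarrow> bool" where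
  "exp_alpha_out n s \<alpha> \<gamma> k \<epsilon> L \<beta> \<longleftrightarrow>
     (\<exists>V :: nat \<Rightarrow> nat \<Rightarrow> nat.
        (\<forall>j\<in>tested n s \<alpha> k \<epsilon>. viterbi_out n s \<alpha> (beta_iter n s \<epsilon> j) \<gamma> k (V j)) \<and>
        (\<exists>j\<in>tested n s \<alpha> k \<epsilon>. L = V j \<and> \<beta> = beta_iter n s \<epsilon> j \<and>
           (\<forall>j'\<in>tested n s \<alpha> k \<epsilon>.
              score_exp n (V j) s \<alpha> (beta_iter n s \<epsilon> j) \<gamma>
              \<le> score_exp n (V j') s \<alpha> (beta_iter n s \<epsilon> j') \<gamma>)))"

end

theory Submission
  imports Defs
begin

text \<open>For a fixed level sequence with weighted sum \<open>T = \<Sum> \<alpha>^(L i) s i\<close>, the score depends on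
  \<beta> only through \<open>n (x - ln x)\<close> with \<open>x = \<beta> T / n\<close>, which is minimised at \<open>x = 1\<close> with value
  \<open>n\<close>. Since \<open>\<Sum> s i \<le> T \<le> \<alpha>^k \<Sum> s i\<close>, the geometric grid of tested \<beta>'s contains a point with
  \<open>1 \<le> x \<le> 1 + \<epsilon>\<close> for the optimal levels \<open>L\<^sup>*\<close>, so the algorithm loses at most the additive
  amount \<open>n \<epsilon>\<close>. This is a relative error \<open>\<epsilon>\<close> because every score exceeds \<open>n + n ln g\<close>, by
  \<open>ln t \<le> t - 1\<close> applied termwise.\<close>

lemma neg_ln_p_exp:
  assumes "lam > 0"
  shows "- ln (p_exp x lam) = lam * x - ln lam"
  using assms by (simp add: p_exp_def ln_mult)

lemma pen_nonneg:
  assumes "\<gamma> \<ge> 0"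
  shows "pen n \<gamma> x y \<ge> 0"
  using assms by (cases "n = 0") (simp_all add: pen_def)

lemma score_exp_eq:
  assumes "\<alpha> > 0" "\<beta> > 0"
  shows "score_exp n L s \<alpha> \<beta> \<gamma> = \<beta> * (\<Sum>i = 1..n. \<alpha> ^ L i * s i) - real n * ln \<beta>
     + (\<Sum>i = 1..n. pen n \<gamma> (prev_level L i) (L i) - real (L i) * ln \<alpha>)"
proof -
  have "score_exp n L s \<alpha> \<beta> \<gamma> = (\<Sum>i = 1..n. \<beta> * (\<alpha> ^ L i * s i) - ln \<beta>
     + (pen n \<gamma> (prev_level L i) (L i) - real (L i) * ln \<alpha>))"
    unfolding score_exp_def
    using assms by (intro sum.cong) (simp_all add: neg_ln_p_exp ln_mult ln_realpow)
  then show ?thesis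
    by (simp add: sum.distrib sum_distrib_left sum_subtractf)
qed

lemma score_exp_ge_sum_ln:
  assumes "\<gamma> \<ge> 0" "\<alpha> > 0" "\<beta> > 0" "\<forall>i\<in>{1..n}. s i > 0"
  shows "real n + (\<Sum>i = 1..n. ln (s i)) \<le> score_exp n L s \<alpha> \<beta> \<gamma>"
proof -
  have "1 + ln (s i) \<le> - ln (p_exp (s i) (\<beta> * \<alpha> ^ L i)) + pen n \<gamma> (prev_level L i) (L i)"
    if i: "i \<in> {1..n}" for i
  proof -
    define lam where "lam = \<beta> * \<alpha> ^ L i"
    have "lam > 0" "s i > 0" using assms i by (auto simp: lam_def)
    then have "ln (lam * s i) \<le> lam * s i - 1" by (intro ln_le_minus_one) simp
    then have "1 + ln (s i) \<le> lam * s i - ln lam"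
      using \<open>lam > 0\<close> \<open>s i > 0\<close> by (simp add: ln_mult)
    then show ?thesis
      using \<open>lam > 0\<close> pen_nonneg[OF assms(1)] by (simp add: neg_ln_p_exp lam_def add_increasing2)
  qed
  then have "(\<Sum>i = 1..n. 1 + ln (s i)) \<le> score_exp n L s \<alpha> \<beta> \<gamma>"
    unfolding score_exp_def by (rule sum_mono)
  then show ?thesis by (simp add: sum.distrib)
qed

lemma one_le_minus_ln: "x > 0 \<Longrightarrow> 1 \<le> x - ln (x::real)"
  using ln_le_minus_one[of x] by simp

lemma score_exp_le_at_near_optimal_beta:
  fixes n :: nat and L :: "nat \<Rightarrow> nat" and s :: "nat \<Rightarrow> real" and \<alpha> \<beta> \<beta>' \<epsilon> :: real
  defines "T \<equiv> \<Sum>i = 1..n. \<alpha> ^ L i * s i"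
  assumes "n \<ge> 1" "\<alpha> > 0" "\<beta> > 0" "\<beta>' > 0" "T > 0"
    and "1 \<le> \<beta> * T / real n" "\<beta> * T / real n \<le> 1 + \<epsilon>"
  shows "score_exp n L s \<alpha> \<beta> \<gamma> \<le> score_exp n L s \<alpha> \<beta>' \<gamma> + real n * \<epsilon>"
proof -
  define x where "x = \<beta> * T / real n"
  define y where "y = \<beta>' * T / real n"
  have "y > 0" using assms by (simp add: y_def)
  have "ln \<beta> - ln \<beta>' = ln x - ln y"
    using assms by (simp add: x_def y_def ln_div ln_mult)
  moreover have "\<beta> * T = real n * x" "\<beta>' * T = real n * y"
    using assms by (simp_all add: x_def y_def)
  moreover have "score_exp n L s \<alpha> \<beta> \<gamma> - score_exp n L s \<alpha> \<beta>' \<gamma>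
      = (\<beta> * T - \<beta>' * T) - real n * (ln \<beta> - ln \<beta>')"
    unfolding score_exp_eq[OF \<open>\<alpha> > 0\<close> \<open>\<beta> > 0\<close>] score_exp_eq[OF \<open>\<alpha> > 0\<close> \<open>\<beta>' > 0\<close>] T_def
    by (simp add: algebra_simps)
  ultimately have "score_exp n L s \<alpha> \<beta> \<gamma> - score_exp n L s \<alpha> \<beta>' \<gamma>
      = real n * ((x - ln x) - (y - ln y))"
    using assms(4,5) by (simp add: right_diff_distrib)
  also have "\<dots> \<le> real n * \<epsilon>"
  proof (rule mult_left_mono)
    have "1 \<le> x" "x \<le> 1 + \<epsilon>" using assms by (simp_all add: x_def)
    then show "(x - ln x) - (y - ln y) \<le> \<epsilon>"
      using ln_ge_zero[of x] one_le_minus_ln[OF \<open>y > 0\<close>] by linarith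
  qed simp
  finally show ?thesis by simp
qed

lemma ex_power_ivl_real:
  fixes b r :: real
  assumes "b > 1" "r \<ge> 1"
  shows "\<exists>j. b ^ j \<le> r \<and> r < b ^ Suc j"
proof -
  obtain m where "r < b ^ m" using real_arch_pow[OF assms(1)] by blast
  then obtain j where "\<not> r < b ^ j" "r < b ^ Suc j"
    using ex_least_nat_less[of "\<lambda>m. r < b ^ m" m] assms(2) by auto
  then show ?thesis by (metis not_less)
qed

lemma tested_iff:
  assumes "mean_seq n s > 0" "\<alpha> > 0" "\<epsilon> > -1"
  shows "j \<in> tested n s \<alpha> k \<epsilon> \<longleftrightarrow> (1 + \<epsilon>) ^ j \<le> \<alpha> ^ k"
  using assms by (simp add: tested_def beta_iter_def field_simps)

lemma ex_tested_near_optimal_beta: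
  assumes "n \<ge> 1" "mean_seq n s > 0" "\<alpha> > 0" "\<epsilon> > 0"
    and "real n * mean_seq n s \<le> T" "T \<le> \<alpha> ^ k * (real n * mean_seq n s)"
  shows "\<exists>j\<in>tested n s \<alpha> k \<epsilon>.
           1 \<le> beta_iter n s \<epsilon> j * T / real n \<and> beta_iter n s \<epsilon> j * T / real n \<le> 1 + \<epsilon>"
proof -
  define r where "r = T / (real n * mean_seq n s)"
  have "1 \<le> r" "r \<le> \<alpha> ^ k" using assms by (simp_all add: r_def field_simps)
  then obtain j where j: "(1 + \<epsilon>) ^ j \<le> r" "r < (1 + \<epsilon>) ^ Suc j"
    using ex_power_ivl_real[of "1 + \<epsilon>" r] assms(4) by auto
  have scale: "beta_iter n s \<epsilon> j * T / real n = r / (1 + \<epsilon>) ^ j"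
    using assms by (simp add: beta_iter_def r_def field_simps)
  have "j \<in> tested n s \<alpha> k \<epsilon>"
    using assms j \<open>r \<le> \<alpha> ^ k\<close> by (simp add: tested_iff)
  moreover have "1 \<le> beta_iter n s \<epsilon> j * T / real n" "beta_iter n s \<epsilon> j * T / real n \<le> 1 + \<epsilon>"
    unfolding scale using j assms(4) by (simp_all add: field_simps)
  ultimately show ?thesis by blast
qed

lemma exp_alpha_out_le_score:
  assumes "exp_alpha_out n s \<alpha> \<gamma> k \<epsilon> L \<beta>" "j \<in> tested n s \<alpha> k \<epsilon>" "is_level_seq n k L'"
  shows "score_exp n L s \<alpha> \<beta> \<gamma> \<le> score_exp n L' s \<alpha> (beta_iter n s \<epsilon> j) \<gamma>"
proof -
  obtain V j0 where V: "\<forall>j\<in>tested n s \<alpha> k \<epsilon>. viterbi_out n s \<alpha> (beta_iter n s \<epsilon> j) \<gamma> k (V j)"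
    and out: "L = V j0" "\<beta> = beta_iter n s \<epsilon> j0"
    and best: "\<forall>j'\<in>tested n s \<alpha> k \<epsilon>. score_exp n (V j0) s \<alpha> (beta_iter n s \<epsilon> j0) \<gamma>
                 \<le> score_exp n (V j') s \<alpha> (beta_iter n s \<epsilon> j') \<gamma>"
    using assms(1) unfolding exp_alpha_out_def by blast
  have "score_exp n L s \<alpha> \<beta> \<gamma> \<le> score_exp n (V j) s \<alpha> (beta_iter n s \<epsilon> j) \<gamma>"
    using best assms(2) out by simp
  also have "\<dots> \<le> score_exp n L' s \<alpha> (beta_iter n s \<epsilon> j) \<gamma>"
    using V assms(2,3) unfolding viterbi_out_def by blast
  finally show ?thesis .
qed

lemma level_weighted_sum_bounds:
  fixes \<alpha> :: real
  assumes "\<alpha> \<ge> 1" "is_level_seq n k L" "\<forall>i\<in>{1..n}. s i > 0"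
  shows "(\<Sum>i = 1..n. s i) \<le> (\<Sum>i = 1..n. \<alpha> ^ L i * s i)"
    and "(\<Sum>i = 1..n. \<alpha> ^ L i * s i) \<le> \<alpha> ^ k * (\<Sum>i = 1..n. s i)"
proof -
  have "s i \<le> \<alpha> ^ L i * s i" if "i \<in> {1..n}" for i
    using mult_right_mono[OF one_le_power[OF assms(1)] less_imp_le[OF bspec[OF assms(3) that]]]
    by simp
  then show "(\<Sum>i = 1..n. s i) \<le> (\<Sum>i = 1..n. \<alpha> ^ L i * s i)"
    by (rule sum_mono)
  have "\<alpha> ^ L i * s i \<le> \<alpha> ^ k * s i" if "i \<in> {1..n}" for i
    using assms that unfolding is_level_seq_def
    by (intro mult_right_mono power_increasing) (auto simp: less_imp_le)
  then show "(\<Sum>i = 1..n. \<alpha> ^ L i * s i) \<le> \<alpha> ^ k * (\<Sum>i = 1..n. s i)"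
    unfolding sum_distrib_left by (rule sum_mono)
qed

lemma ln_geometric_mean:
  fixes s :: "nat \<Rightarrow> real"
  assumes "n \<ge> 1" "\<forall>i\<in>{1..n}. s i > 0"
  shows "real n * ln ((\<Prod>i = 1..n. s i) powr (1 / real n)) = (\<Sum>i = 1..n. ln (s i))"
proof -
  have "ln (\<Prod>i = 1..n. s i) = (\<Sum>i = 1..n. ln (s i))"
    using assms by (intro ln_prod) fastforce+
  then show ?thesis using assms(1) by simp
qed

theorem proposition6:
  fixes n k :: nat and s :: "nat \<Rightarrow> real" and \<alpha> \<gamma> \<epsilon> :: real
    and Lstar L :: "nat \<Rightarrow> nat" and \<beta>star \<beta> :: real
  assumes "n \<ge> 1"
    and "\<forall>i\<in>{1..n}. s i > 0"
    and "\<alpha> > 1" and "\<gamma> > 0" and "k \<ge> 1" and "\<epsilon> > 0"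
    and "exp_opt n s \<alpha> \<gamma> k Lstar \<beta>star"
    and "exp_alpha_out n s \<alpha> \<gamma> k \<epsilon> L \<beta>"
  defines "g \<equiv> (\<Prod>i = 1..n. s i) powr (1 / real n)"
  shows "score_exp n L s \<alpha> \<beta> \<gamma> - real n * ln g
           \<le> (1 + \<epsilon>) * (score_exp n Lstar s \<alpha> \<beta>star \<gamma> - real n * ln g)
         \<and> (g \<ge> 1 \<longrightarrow> score_exp n L s \<alpha> \<beta> \<gamma> \<le> (1 + \<epsilon>) * score_exp n Lstar s \<alpha> \<beta>star \<gamma>)"
proof -
  define T where "T = (\<Sum>i = 1..n. \<alpha> ^ Lstar i * s i)"
  define opt where "opt = score_exp n Lstar s \<alpha> \<beta>star \<gamma>"
  have levels: "is_level_seq n k Lstar" and "\<beta>star > 0"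
    using assms(7) by (auto simp: exp_opt_def)
  have "\<alpha> > 0" using assms(3) by simp
  have sum_s: "real n * mean_seq n s = (\<Sum>i = 1..n. s i)" "(\<Sum>i = 1..n. s i) > 0"
    using assms(1,2) by (auto simp: mean_seq_def intro: sum_pos)
  then have "mean_seq n s > 0" using assms(1) by (simp add: mean_seq_def)
  have T: "real n * mean_seq n s \<le> T" "T \<le> \<alpha> ^ k * (real n * mean_seq n s)"
    using level_weighted_sum_bounds[OF _ levels assms(2)] assms(3) unfolding sum_s(1) T_def
    by simp_all
  obtain j where j: "j \<in> tested n s \<alpha> k \<epsilon>"
      "1 \<le> beta_iter n s \<epsilon> j * T / real n" "beta_iter n s \<epsilon> j * T / real n \<le> 1 + \<epsilon>"
    using ex_tested_near_optimal_beta[OF assms(1) \<open>mean_seq n s > 0\<close> \<open>\<alpha> > 0\<close> assms(6) T] by blast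
  have "beta_iter n s \<epsilon> j > 0" "T > 0"
    using \<open>mean_seq n s > 0\<close> T(1) sum_s assms(6) by (simp_all add: beta_iter_def)
  have "score_exp n L s \<alpha> \<beta> \<gamma> \<le> score_exp n Lstar s \<alpha> (beta_iter n s \<epsilon> j) \<gamma>"
    by (rule exp_alpha_out_le_score[OF assms(8) j(1) levels])
  also have "\<dots> \<le> opt + real n * \<epsilon>"
    unfolding opt_def
    by (rule score_exp_le_at_near_optimal_beta[OF assms(1) \<open>\<alpha> > 0\<close> \<open>beta_iter n s \<epsilon> j > 0\<close>
          \<open>\<beta>star > 0\<close> \<open>T > 0\<close>[unfolded T_def] j(2,3)[unfolded T_def]])
  finally have additive: "score_exp n L s \<alpha> \<beta> \<gamma> \<le> opt + real n * \<epsilon>" .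
  have "real n \<le> opt - real n * ln g"
    using score_exp_ge_sum_ln[OF less_imp_le[OF assms(4)] \<open>\<alpha> > 0\<close> \<open>\<beta>star > 0\<close> assms(2), of Lstar]
      ln_geometric_mean[OF assms(1,2)] by (simp add: opt_def g_def)
  then have "real n * \<epsilon> \<le> \<epsilon> * (opt - real n * ln g)"
    using assms(6) by (simp add: mult.commute)
  with additive have bound: "score_exp n L s \<alpha> \<beta> \<gamma> - real n * ln g \<le> (1 + \<epsilon>) * (opt - real n * ln g)"
    by (simp add: algebra_simps)
  moreover have "score_exp n L s \<alpha> \<beta> \<gamma> \<le> (1 + \<epsilon>) * opt" if "g \<ge> 1"
  proof -
    have "0 \<le> \<epsilon> * (real n * ln g)" using that assms(6) by simp
    then show ?thesis using bound by (simp add: algebra_simps)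
  qed
  ultimately show ?thesis by (simp add: opt_def)
qed

end
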